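(* Let $m,d\geq 1$ and let $f:(0,\infty)^m\times\mathbb{R}^d\to\mathbb{R}$, $f=f(t,x)$, satisfy $f(t,0)=0$, have continuous first-order partial derivatives with respect to each $t^\alpha$ and continuous second-order partial derivatives with respect to the $x^a$. Suppose $f$ is a solution of the backward diffusion-like PDE system $$\frac{\partial f}{\partial t^\alpha}(t,x)+\frac12\,c_\alpha(t)\,\Delta_x f(t,x)=0,\qquad \alpha=1,\dots,m.$$ Then $f$ depends on the point $t=(t^1,\dots,t^m)$ only through the product $v=t^1\cdots t^m$, i.e. there is a function $\varphi$ with $f(t,x)=\varphi(t^1\cdots t^m,x)$; thus $f$ is a function of the volume $v$ of the box $\Omega_{0t}=\prod_\alpha[0,t^\alpha]$.
   Context: Here $c_\alpha(t)=\frac{\partial v}{\partial t^\alpha}=\prod_{\beta\neq\alpha}t^\beta$ where $v=t^1\cdots t^m$, and $\Delta_x f=\sum_{a=1}^d\frac{\partial^2 f}{(\partial x^a)^2}$. *)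

theory Defs
  imports "HOL-Analysis.Analysis"
begin

definition orthant :: "(real^'m) set" where
  "orthant = {t. \<forall>\<alpha>. 0 < t $ \<alpha>}"

definition vupd :: "real^'n \<Rightarrow> 'n \<Rightarrow> real \<Rightarrow> real^'n" where
  "vupd v i s = (\<chi> j. if j = i then s else v $ j)"

definition c_coef :: "real^'m \<Rightarrow> 'm \<Rightarrow> real" where
  "c_coef t \<alpha> = (\<Prod>\<beta>\<in>UNIV - {\<alpha>}. t $ \<beta>)"

end

theory Submission
  imports Defs
begin

text \<open>
  Since \<open>t\<^sup>\<alpha> c\<^sub>\<alpha>(t) = v\<close> for every \<open>\<alpha>\<close>, the PDE system gives
  \<open>t\<^sup>\<alpha> \<partial>f/\<partial>t\<^sup>\<alpha> = -v \<Delta>\<^sub>x f / 2\<close>, independently of \<open>\<alpha>\<close>.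
  Hence along each hyperbola \<open>s \<mapsto> (t\<^sup>\<alpha> e\<^sup>s, t\<^sup>\<beta> e\<^sup>-\<^sup>s)\<close> in a pair of coordinates
  the derivative of \<open>f\<close> is \<open>t\<^sup>\<alpha> \<partial>f/\<partial>t\<^sup>\<alpha> - t\<^sup>\<beta> \<partial>f/\<partial>t\<^sup>\<beta> = 0\<close>: \<open>f\<close> is invariant
  under moving a factor from one coordinate to another. Moving every coordinate
  into a fixed one brings \<open>t\<close> to \<open>(v, 1, \<dots>, 1)\<close> without changing \<open>f\<close>.
\<close>

lemma vupd_nth: "vupd v i s $ j = (if j = i then s else v $ j)"
  by (simp add: vupd_def)

lemma c_coef_times_coord: "c_coef t \<alpha> * t $ \<alpha> = (\<Prod>\<beta>\<in>UNIV. t $ \<beta>)"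
  unfolding c_coef_def
  using prod.remove[of UNIV \<alpha> "\<lambda>\<beta>. t $ \<beta>"] by (simp add: mult.commute)

lemma pde_balance:
  assumes pde: "\<forall>\<alpha>. \<forall>t\<in>orthant. \<forall>x. Ft \<alpha> t x + 1/2 * c_coef t \<alpha> * L t x = 0"
    and t: "t \<in> orthant"
  shows "t $ \<alpha> * Ft \<alpha> t x = t $ \<beta> * Ft \<beta> t x"
proof -
  have "t $ \<gamma> * Ft \<gamma> t x = - 1/2 * L t x * (\<Prod>\<beta>\<in>UNIV. t $ \<beta>)" for \<gamma>
  proof -
    have "Ft \<gamma> t x = - 1/2 * c_coef t \<gamma> * L t x"
      using pde t by (simp add: eq_neg_iff_add_eq_0)
    then show ?thesis
      by (simp flip: c_coef_times_coord[of t \<gamma>])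
  qed
  from this[of \<alpha>] this[of \<beta>] show ?thesis by simp
qed

lemma has_derivative_of_partials:
  fixes g :: "real \<Rightarrow> real \<Rightarrow> real"
  assumes X: "open X" and Y: "open Y" "convex Y"
    and ga: "((\<lambda>s. g s b) has_real_derivative Ga) (at a)"
    and gb: "\<And>a b. a \<in> X \<Longrightarrow> b \<in> Y \<Longrightarrow> ((\<lambda>s. g a s) has_real_derivative Gb a b) (at b)"
    and gb_cont: "continuous_on (X \<times> Y) (\<lambda>(a, b). Gb a b)"
    and ab: "a \<in> X" "b \<in> Y"
  shows "((\<lambda>(a, b). g a b) has_derivative (\<lambda>(h, k). h * Ga + k * Gb a b)) (at (a, b))"
proof -
  have "((\<lambda>(a, b). g a b) has_derivative
      (\<lambda>(h, k). h * Ga + blinfun_mult_left (Gb a b) k)) (at (a, b) within X \<times> Y)"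
  proof (rule has_derivative_partialsI)
    show "((\<lambda>s. g s b) has_derivative (\<lambda>h. h * Ga)) (at a within X)"
      using has_derivative_at_withinI[OF ga[unfolded has_field_derivative_def]]
      by (simp add: mult_commute_abs)
    show "((\<lambda>s. g a' s) has_derivative blinfun_apply (blinfun_mult_left (Gb a' b'))) (at b' within Y)"
      if "a' \<in> X" "b' \<in> Y" for a' b'
      using has_derivative_at_withinI[OF gb[OF that, unfolded has_field_derivative_def]]
      by (simp add: mult_commute_abs)
    have "continuous_on (X \<times> Y) (\<lambda>(a, b). blinfun_mult_left (Gb a b))"
      using bounded_linear.continuous_on[OF bounded_linear_blinfun_mult_left gb_cont]
      by (simp add: case_prod_beta)
    then show "continuous (at (a, b) within X \<times> Y) (\<lambda>(a, b). blinfun_mult_left (Gb a b))"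
      using ab by (simp add: continuous_on_eq_continuous_within)
  qed (use ab Y in auto)
  moreover have "at (a, b) within X \<times> Y = at (a, b)"
    using ab X Y by (intro at_within_open) (auto intro: open_Times)
  ultimately show ?thesis by (simp add: case_prod_beta)
qed

lemma const_on_hyperbolas:
  fixes g :: "real \<Rightarrow> real \<Rightarrow> real"
  assumes ga: "\<And>a b. a > 0 \<Longrightarrow> b > 0 \<Longrightarrow> ((\<lambda>s. g s b) has_real_derivative Ga a b) (at a)"
    and gb: "\<And>a b. a > 0 \<Longrightarrow> b > 0 \<Longrightarrow> ((\<lambda>s. g a s) has_real_derivative Gb a b) (at b)"
    and gb_cont: "continuous_on ({0<..} \<times> {0<..}) (\<lambda>(a, b). Gb a b)"
    and balance: "\<And>a b. a > 0 \<Longrightarrow> b > 0 \<Longrightarrow> a * Ga a b = b * Gb a b"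
    and pos: "a > 0" "b > 0" "r > 0"
  shows "g (a * r) (b / r) = g a b"
proof -
  define F where "F = (\<lambda>s. g (a * exp s) (b * exp (-s)))"
  have "(F has_real_derivative 0) (at s)" for s
  proof -
    let ?a = "a * exp s" and ?b = "b * exp (-s)"
    have ab': "?a > 0" "?b > 0" using pos by auto
    have curve: "((\<lambda>s. (a * exp s, b * exp (-s))) has_derivative (\<lambda>h. (h * ?a, - (h * ?b)))) (at s)"
      by (auto intro!: derivative_eq_intros simp: algebra_simps)
    have "((\<lambda>(a, b). g a b) has_derivative (\<lambda>(h, k). h * Ga ?a ?b + k * Gb ?a ?b)) (at (?a, ?b))"
      using ab' by (intro has_derivative_of_partials[where X = "{0<..}" and Y = "{0<..}"] ga gb gb_cont) auto
    from has_derivative_compose[OF curve this]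
    have "(F has_derivative (\<lambda>h. h * (?a * Ga ?a ?b - ?b * Gb ?a ?b))) (at s)"
      by (simp add: F_def o_def algebra_simps)
    then show ?thesis
      using balance[OF ab'] by (simp add: has_field_derivative_def lambda_zero)
  qed
  then have "F (ln r) = F 0" using DERIV_isconst_all by blast
  then show ?thesis
    using pos by (simp add: F_def exp_minus divide_inverse)
qed

lemma scaling_invariant:
  fixes f :: "real^'m \<Rightarrow> real^'d \<Rightarrow> real"
  assumes dt: "\<forall>\<alpha>. \<forall>t\<in>orthant. \<forall>x.
               ((\<lambda>s. f (vupd t \<alpha> s) x) has_real_derivative Ft \<alpha> t x) (at (t $ \<alpha>))"
    and dt_cont: "\<forall>\<alpha>. continuous_on (orthant \<times> UNIV) (\<lambda>(t, x). Ft \<alpha> t x)"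
    and balance: "\<And>\<alpha> \<beta> t. t \<in> orthant \<Longrightarrow> t $ \<alpha> * Ft \<alpha> t x = t $ \<beta> * Ft \<beta> t x"
    and t: "t \<in> orthant" and \<alpha>\<beta>: "\<alpha> \<noteq> \<beta>" and r: "r > 0"
  shows "f (vupd (vupd t \<alpha> (t $ \<alpha> * r)) \<beta> (t $ \<beta> / r)) x = f t x"
proof -
  define w where "w a b = vupd (vupd t \<alpha> a) \<beta> b" for a b
  have w_nth: "w a b $ j = (if j = \<beta> then b else if j = \<alpha> then a else t $ j)" for a b j
    by (simp add: w_def vupd_nth)
  have w_orthant: "w a b \<in> orthant" if "a > 0" "b > 0" for a b
    using t that by (auto simp: orthant_def w_nth)
  have w_upd: "vupd (w a b) \<alpha> s = w s b" "vupd (w a b) \<beta> s = w a s" for a b s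
    using \<alpha>\<beta> by (auto simp: vec_eq_iff vupd_nth w_nth)
  have w_coords: "w a b $ \<alpha> = a" "w a b $ \<beta> = b" for a b
    using \<alpha>\<beta> by (auto simp: w_nth)
  have partial: "((\<lambda>s. f (w s b) x) has_real_derivative Ft \<alpha> (w a b) x) (at a)"
    "((\<lambda>s. f (w a s) x) has_real_derivative Ft \<beta> (w a b) x) (at b)"
    if "a > 0" "b > 0" for a b
  proof -
    have "((\<lambda>s. f (vupd (w a b) \<gamma> s) x) has_real_derivative Ft \<gamma> (w a b) x) (at (w a b $ \<gamma>))"
      for \<gamma>
      using dt w_orthant[OF that] by blast
    from this[of \<alpha>] this[of \<beta>] show
      "((\<lambda>s. f (w s b) x) has_real_derivative Ft \<alpha> (w a b) x) (at a)"
      "((\<lambda>s. f (w a s) x) has_real_derivative Ft \<beta> (w a b) x) (at b)"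
      by (simp_all only: w_upd w_coords)
  qed
  have w_cont: "continuous_on S (\<lambda>(a, b). w a b)" for S
  proof -
    have "(\<lambda>(a, b). w a b) = (\<lambda>p. \<chi> j. if j = \<beta> then snd p else if j = \<alpha> then fst p else t $ j)"
      by (auto simp: vec_eq_iff w_nth)
    moreover have "continuous_on S (\<lambda>p. if j = \<beta> then snd p else if j = \<alpha> then fst p else t $ j)"
      for j :: 'm
      by (cases "j = \<beta>"; cases "j = \<alpha>") (auto intro!: continuous_intros)
    ultimately show ?thesis
      by (simp add: continuous_on_vec_lambda)
  qed
  have "continuous_on ({0<..} \<times> {0<..}) ((\<lambda>(t, x). Ft \<beta> t x) \<circ> (\<lambda>(a, b). (w a b, x)))"
  proof (rule continuous_on_compose)
    show "continuous_on ({0<..} \<times> {0<..}) (\<lambda>(a, b). (w a b, x))"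
      using w_cont by (auto intro!: continuous_intros simp: case_prod_beta)
    have "(\<lambda>(a, b). (w a b, x)) ` ({0<..} \<times> {0<..}) \<subseteq> orthant \<times> UNIV"
      using w_orthant by auto
    then show "continuous_on ((\<lambda>(a, b). (w a b, x)) ` ({0<..} \<times> {0<..})) (\<lambda>(t, x). Ft \<beta> t x)"
      using continuous_on_subset dt_cont by blast
  qed
  then have Ft_cont: "continuous_on ({0<..} \<times> {0<..}) (\<lambda>(a, b). Ft \<beta> (w a b) x)"
    by (simp add: o_def case_prod_beta)
  have w_balance: "a * Ft \<alpha> (w a b) x = b * Ft \<beta> (w a b) x" if "a > 0" "b > 0" for a b
    using balance[OF w_orthant[OF that], of \<alpha> \<beta>] by (simp only: w_coords)
  have t_pos: "t $ \<alpha> > 0" "t $ \<beta> > 0" using t by (simp_all add: orthant_def)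
  have "f (w (t $ \<alpha> * r) (t $ \<beta> / r)) x = f (w (t $ \<alpha>) (t $ \<beta>)) x"
    by (rule const_on_hyperbolas[where g = "\<lambda>a b. f (w a b) x"
          and Ga = "\<lambda>a b. Ft \<alpha> (w a b) x" and Gb = "\<lambda>a b. Ft \<beta> (w a b) x"])
      (assumption | rule partial Ft_cont w_balance t_pos r)+
  moreover have "w (t $ \<alpha>) (t $ \<beta>) = t" by (auto simp: vec_eq_iff w_nth)
  ultimately show ?thesis by (simp add: w_def)
qed

definition gather :: "'m \<Rightarrow> 'm set \<Rightarrow> real^'m \<Rightarrow> real^'m" where
  "gather \<alpha>\<^sub>0 S t = (\<chi> \<gamma>. if \<gamma> \<in> S then 1 else if \<gamma> = \<alpha>\<^sub>0 then t $ \<alpha>\<^sub>0 * (\<Prod>\<beta>\<in>S. t $ \<beta>) else t $ \<gamma>)"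

lemma gather_empty: "gather \<alpha>\<^sub>0 {} t = t"
  by (simp add: gather_def vec_eq_iff)

lemma gather_orthant: "t \<in> orthant \<Longrightarrow> gather \<alpha>\<^sub>0 S t \<in> orthant"
  by (auto simp: orthant_def gather_def intro!: mult_pos_pos prod_pos)

text \<open>The right-hand side is a move with ratio \<open>t $ \<beta>\<close>, in the shape of \<open>scaling_invariant\<close>.\<close>
lemma gather_insert:
  assumes "finite S" "\<beta> \<notin> S" "\<alpha>\<^sub>0 \<notin> S" "\<beta> \<noteq> \<alpha>\<^sub>0" "t $ \<beta> \<noteq> 0"
  shows "gather \<alpha>\<^sub>0 (insert \<beta> S) t =
    vupd (vupd (gather \<alpha>\<^sub>0 S t) \<alpha>\<^sub>0 (gather \<alpha>\<^sub>0 S t $ \<alpha>\<^sub>0 * t $ \<beta>)) \<beta> (gather \<alpha>\<^sub>0 S t $ \<beta> / t $ \<beta>)"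
  using assms by (auto simp: vec_eq_iff vupd_nth gather_def mult_ac)

lemma gather_all: "gather \<alpha>\<^sub>0 (UNIV - {\<alpha>\<^sub>0}) t = (\<chi> \<gamma>. if \<gamma> = \<alpha>\<^sub>0 then (\<Prod>\<alpha>\<in>UNIV. t $ \<alpha>) else 1)"
  using prod.remove[of UNIV \<alpha>\<^sub>0 "\<lambda>\<alpha>. t $ \<alpha>"] by (simp add: vec_eq_iff gather_def)

lemma function_of_coord_product:
  fixes h :: "real^'m \<Rightarrow> 'b"
  assumes move: "\<And>t \<alpha> \<beta> r. t \<in> orthant \<Longrightarrow> \<alpha> \<noteq> \<beta> \<Longrightarrow> r > 0 \<Longrightarrow>
      h (vupd (vupd t \<alpha> (t $ \<alpha> * r)) \<beta> (t $ \<beta> / r)) = h t"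
  shows "\<exists>\<phi>. \<forall>t\<in>orthant. h t = \<phi> (\<Prod>\<alpha>\<in>UNIV. t $ \<alpha>)"
proof -
  fix \<alpha>\<^sub>0 :: 'm
  have "h (gather \<alpha>\<^sub>0 S t) = h t" if "S \<subseteq> UNIV - {\<alpha>\<^sub>0}" "t \<in> orthant" for S t
    using finite[of S] that
  proof (induction S)
    case empty
    then show ?case by (simp add: gather_empty)
  next
    case (insert \<beta> S)
    then have pos: "t $ \<beta> > 0" and "\<beta> \<noteq> \<alpha>\<^sub>0"
      by (auto simp: orthant_def)
    have "h (gather \<alpha>\<^sub>0 (insert \<beta> S) t) = h (vupd (vupd (gather \<alpha>\<^sub>0 S t) \<alpha>\<^sub>0
        (gather \<alpha>\<^sub>0 S t $ \<alpha>\<^sub>0 * t $ \<beta>)) \<beta> (gather \<alpha>\<^sub>0 S t $ \<beta> / t $ \<beta>))"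
      using insert \<open>\<beta> \<noteq> \<alpha>\<^sub>0\<close> pos by (subst gather_insert) auto
    also have "\<dots> = h (gather \<alpha>\<^sub>0 S t)"
      using insert \<open>\<beta> \<noteq> \<alpha>\<^sub>0\<close> pos by (intro move gather_orthant) auto
    also have "\<dots> = h t" using insert by simp
    finally show ?case .
  qed
  from this[of "UNIV - {\<alpha>\<^sub>0}"] show ?thesis
    by (intro exI[of _ "\<lambda>v. h (\<chi> \<gamma>. if \<gamma> = \<alpha>\<^sub>0 then v else 1)"]) (simp add: gather_all)
qed

theorem mainTheorem2:
  fixes f :: "real^'m \<Rightarrow> real^'d \<Rightarrow> real"
    and Ft :: "'m \<Rightarrow> real^'m \<Rightarrow> real^'d \<Rightarrow> real"
    and Fx :: "'d \<Rightarrow> real^'m \<Rightarrow> real^'d \<Rightarrow> real"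
    and Fxx :: "'d \<Rightarrow> 'd \<Rightarrow> real^'m \<Rightarrow> real^'d \<Rightarrow> real"
  assumes zero: "\<forall>t\<in>orthant. f t 0 = 0"
    and dt: "\<forall>\<alpha>. \<forall>t\<in>orthant. \<forall>x.
               ((\<lambda>s. f (vupd t \<alpha> s) x) has_real_derivative Ft \<alpha> t x) (at (t $ \<alpha>))"
    and dt_cont: "\<forall>\<alpha>. continuous_on (orthant \<times> UNIV) (\<lambda>(t, x). Ft \<alpha> t x)"
    and dx: "\<forall>a. \<forall>t\<in>orthant. \<forall>x.
               ((\<lambda>s. f t (vupd x a s)) has_real_derivative Fx a t x) (at (x $ a))"
    and dxx: "\<forall>a b. \<forall>t\<in>orthant. \<forall>x.
               ((\<lambda>s. Fx a t (vupd x b s)) has_real_derivative Fxx a b t x) (at (x $ b))"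
    and dxx_cont: "\<forall>a b. continuous_on (orthant \<times> UNIV) (\<lambda>(t, x). Fxx a b t x)"
    and pde: "\<forall>\<alpha>. \<forall>t\<in>orthant. \<forall>x.
               Ft \<alpha> t x + 1/2 * c_coef t \<alpha> * (\<Sum>a\<in>UNIV. Fxx a a t x) = 0"
  shows "\<exists>\<phi> :: real \<Rightarrow> real^'d \<Rightarrow> real.
           \<forall>t\<in>orthant. \<forall>x. f t x = \<phi> (\<Prod>\<alpha>\<in>UNIV. t $ \<alpha>) x"
proof -
  have "f (vupd (vupd t \<alpha> (t $ \<alpha> * r)) \<beta> (t $ \<beta> / r)) = f t"
    if "t \<in> orthant" "\<alpha> \<noteq> \<beta>" "r > 0" for t \<alpha> \<beta> r
    using scaling_invariant[OF dt dt_cont pde_balance[OF pde] that] by blast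
  then obtain \<phi> where "\<forall>t\<in>orthant. f t = \<phi> (\<Prod>\<alpha>\<in>UNIV. t $ \<alpha>)"
    using function_of_coord_product[of f] by blast
  then show ?thesis by (intro exI[of _ \<phi>]) simp
qed

end
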